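(* Let $d\ge1$, $n\ge1$, and let $\{\boldsymbol{x}_i\}_{i=1}^n$ be an $n$-point jittered sampling point process on $\mathbb{S}^d$ associated with a partition $\{D_{i,n}\}_{i=1}^n$ and constant $c$ as described in the context, with analysis matrix $X_n$. Then \[ \mathbb{E}\Big(\Big\|\frac1nX_n^TX_n-\frac1{d+1}\mathcal{I}_{d+1}\Big\|_{\mathcal F}^2\Big)\le\frac1n-\frac1n\left(1-\frac{c^2}{2n^{2/d}}\right)^2. \]
   Context: $\mathbb{S}^d=\{\boldsymbol{x}\in\mathbb{R}^{d+1}:\|\boldsymbol{x}\|=1\}$, $\sigma_d$ normalized surface measure, $\mathrm{diam}\,A=\sup\{\|\boldsymbol{x}-\boldsymbol{y}\|:\boldsymbol{x},\boldsymbol{y}\in A\}$. Analysis matrix: the $n\times(d+1)$ matrix $X_n$ with rows $\boldsymbol{x}_i^T$; $\mathcal{I}_{d+1}$ identity, $\|\cdot\|_{\mathcal F}$ Frobenius norm. Jittered sampling point process: $\{D_{i,n}\}_{i=1}^n$ is a partition of $\mathbb{S}^d$ with $\bigcup_jD_{j,n}=\mathbb{S}^d$, $\sigma_d(D_{j,n}\cap D_{k,n})=0$ for $j\neq k$, $\sigma_d(D_{j,n})=1/n$, and $\mathrm{diam}\,D_{j,n}\le c/n^{1/d}<\sqrt2$ for all $j$, with $c$ a constant independent of $n$; independently for each $i$, $\boldsymbol{x}_i$ is chosen uniformly at random from $D_{i,n}$ (w.r.t. $\sigma_d$ restricted to $D_{i,n}$ and normalized). *)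

theory Defs
  imports "HOL-Probability.Probability"
begin

text \<open>Normalized surface measure on the unit sphere of real^'m (= S^d, d+1 = CARD('m)),
  defined by the cone construction: sigma(A) = vol{t x : 0 < t \<le> 1, x \<in> A} / vol(unit ball).\<close>

definition sphere_cone :: "(real^'m) set \<Rightarrow> (real^'m) set" where
  "sphere_cone A = {t *\<^sub>R x | t x. 0 < t \<and> t \<le> 1 \<and> x \<in> A}"

definition sphere_measure :: "(real^'m) measure" where
  "sphere_measure = measure_of (sphere 0 1) (sets (restrict_space borel (sphere 0 1)))
      (\<lambda>A. emeasure lebesgue (sphere_cone A) / emeasure lebesgue (ball (0::real^'m) 1))"

text \<open>The Gram matrix X_n^T X_n of the analysis matrix X_n whose rows are x_0, ..., x_{n-1}.\<close>

definition analysis_gram :: "nat \<Rightarrow> (nat \<Rightarrow> real^'m) \<Rightarrow> real^'m^'m" where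
  "analysis_gram n x = (\<chi> j k. \<Sum>i<n. (x i $ j) * (x i $ k))"

definition frobenius_norm :: "real^'m^'k \<Rightarrow> real" where
  "frobenius_norm A = sqrt (\<Sum>j\<in>UNIV. \<Sum>k\<in>UNIV. (A $ j $ k)^2)"

definition jittered_partition :: "nat \<Rightarrow> real \<Rightarrow> (nat \<Rightarrow> (real^'m) set) \<Rightarrow> bool" where
  "jittered_partition n c D \<longleftrightarrow>
     (\<forall>i<n. D i \<in> sets sphere_measure) \<and>
     (\<Union>i<n. D i) = sphere 0 1 \<and>
     (\<forall>j<n. \<forall>k<n. j \<noteq> k \<longrightarrow> measure sphere_measure (D j \<inter> D k) = 0) \<and>
     (\<forall>i<n. measure sphere_measure (D i) = 1 / real n) \<and>
     (\<forall>i<n. diameter (D i) \<le> c / real n powr (1 / real (CARD('m) - 1))) \<and>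
     c / real n powr (1 / real (CARD('m) - 1)) < sqrt 2"

definition jittered_law :: "nat \<Rightarrow> (nat \<Rightarrow> (real^'m) set) \<Rightarrow> (nat \<Rightarrow> real^'m) measure" where
  "jittered_law n D = (\<Pi>\<^sub>M i\<in>{..<n}. uniform_measure sphere_measure (D i))"

end

theory Submission
  imports Defs
begin

text \<open>With \<open>Y\<^sub>i = x\<^sub>i x\<^sub>i\<^sup>T\<close>, the matrix \<open>(1/n) X\<^sub>n\<^sup>T X\<^sub>n\<close> is the average of the \<open>Y\<^sub>i\<close>. Since the
  pieces have equal area, \<open>(1/n) \<Sum>\<^sub>i E Y\<^sub>i\<close> is the second moment matrix of \<open>\<sigma>\<^sub>d\<close>, which is
  \<open>I/(d+1)\<close> because \<open>\<sigma>\<^sub>d\<close> is invariant under sign changes and transpositions of coordinates.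
  By independence the expected squared Frobenius norm is therefore
  \<open>(1/n\<^sup>2) \<Sum>\<^sub>i E\<parallel>Y\<^sub>i - E Y\<^sub>i\<parallel>\<^sup>2 = (1/n\<^sup>2) \<Sum>\<^sub>i (1 - \<parallel>E Y\<^sub>i\<parallel>\<^sup>2)\<close>, as \<open>\<parallel>Y\<^sub>i\<parallel> = |x\<^sub>i|\<^sup>2 = 1\<close>.
  Finally \<open>\<parallel>E Y\<^sub>i\<parallel>\<^sup>2 = E (x \<bullet> y)\<^sup>2\<close> for independent \<open>x, y\<close> uniform on \<open>D\<^sub>i\<close>, and
  \<open>x \<bullet> y = 1 - |x - y|\<^sup>2/2 \<ge> 1 - \<delta>\<^sup>2/2 \<ge> 0\<close> when \<open>diam D\<^sub>i \<le> \<delta> < \<surd>2\<close>.\<close>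

lemma borel_measurable_linear:
  fixes f :: "'a::euclidean_space \<Rightarrow> 'b::euclidean_space"
  shows "linear f \<Longrightarrow> f \<in> borel_measurable borel"
  by (intro borel_measurable_continuous_onI linear_continuous_on)
    (simp add: linear_conv_bounded_linear)

section \<open>Signed permutations of coordinates\<close>

definition signed_perm :: "('m::finite \<Rightarrow> 'm) \<Rightarrow> ('m \<Rightarrow> real) \<Rightarrow> real^'m \<Rightarrow> real^'m" where
  "signed_perm p s x = (\<chi> i. s i * x $ p i)"

lemma linear_signed_perm: "linear (signed_perm p s)"
  by (auto simp: linear_iff vec_eq_iff algebra_simps signed_perm_def)

lemma norm_signed_perm:
  assumes "bij p" and "\<And>i. \<bar>s i\<bar> = 1"
  shows "norm (signed_perm p s x) = norm x"
proof -
  have "(s i)\<^sup>2 = 1" for i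
    using assms(2)[of i] by (metis power2_abs power_one)
  then have "(\<Sum>i\<in>UNIV. (s i * x $ p i)\<^sup>2) = (\<Sum>i\<in>UNIV. (x $ p i)\<^sup>2)"
    by (simp add: power_mult_distrib)
  also have "\<dots> = (\<Sum>i\<in>UNIV. (x $ i)\<^sup>2)"
    using sum.reindex_bij_betw[of p UNIV UNIV "\<lambda>i. (x $ i)\<^sup>2"] assms(1) by (simp add: bij_def)
  finally show ?thesis by (simp add: norm_vec_def L2_set_def signed_perm_def)
qed

lemma lborel_distr_signed_perm:
  fixes p :: "'m::finite \<Rightarrow> 'm"
  assumes p: "bij p" and s: "\<And>i. \<bar>s i\<bar> = 1"
  shows "distr lborel borel (signed_perm p s) = lborel"
proof (rule lborel_eqI[symmetric])
  let ?T = "signed_perm p s"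
  have T_borel: "?T \<in> borel_measurable borel"
    by (rule borel_measurable_linear[OF linear_signed_perm])
  fix l u :: "real^'m"
  assume lu_Basis: "\<And>b. b \<in> Basis \<Longrightarrow> l \<bullet> b \<le> u \<bullet> b"
  have lu: "l $ i \<le> u $ i" for i
    using lu_Basis[of "axis i 1"] by (simp add: inner_axis)
  define q where "q = inv p"
  have pq: "p (q j) = j" for j
    using p by (simp add: q_def bij_is_surj surj_f_inv_f)
  have bij_q: "bij q"
    using p by (simp add: q_def bij_imp_bij_inv)
  define l' where "l' = (\<chi> j. if s (q j) = 1 then l $ q j else - u $ q j)"
  define u' where "u' = (\<chi> j. if s (q j) = 1 then u $ q j else - l $ q j)"
  have s': "s i = 1 \<or> s i = -1" for i using s[of i] by linarith
  have "x \<in> ?T -` box l u \<longleftrightarrow> x \<in> box l' u'" for x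
  proof -
    have "x \<in> ?T -` box l u \<longleftrightarrow> (\<forall>i. l $ i < s i * x $ p i \<and> s i * x $ p i < u $ i)"
      by (simp add: mem_box_cart signed_perm_def)
    also have "\<dots> \<longleftrightarrow> (\<forall>j. l $ q j < s (q j) * x $ j \<and> s (q j) * x $ j < u $ q j)"
      by (metis pq q_def p bij_inv_eq_iff)
    also have "\<dots> \<longleftrightarrow> x \<in> box l' u'"
    proof -
      have "l $ q j < s (q j) * x $ j \<and> s (q j) * x $ j < u $ q j \<longleftrightarrow>
          l' $ j < x $ j \<and> x $ j < u' $ j" for j
        using s'[of "q j"] by (auto simp: l'_def u'_def)
      then show ?thesis by (simp add: mem_box_cart)
    qed
    finally show ?thesis .
  qed
  then have "?T -` box l u = box l' u'" by blast
  then have "emeasure (distr lborel borel ?T) (box l u) = emeasure lborel (box l' u')"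
    using T_borel by (simp add: emeasure_distr)
  also have "\<dots> = (\<Prod>j\<in>UNIV. u' $ j - l' $ j)"
    using lu by (subst emeasure_lborel_box_eq)
      (auto simp: l'_def u'_def Basis_vec_def inner_axis axis_eq_axis prod.UNION_disjoint)
  also have "\<dots> = (\<Prod>j\<in>UNIV. u $ q j - l $ q j)"
    using s' by (intro arg_cong[where f=ennreal] prod.cong) (auto simp: l'_def u'_def)
  also have "\<dots> = (\<Prod>i\<in>UNIV. u $ i - l $ i)"
    using prod.reindex_bij_betw[of q UNIV UNIV "\<lambda>i. u $ i - l $ i"] bij_q by (simp add: bij_def)
  also have "\<dots> = (\<Prod>b\<in>Basis. (u - l) \<bullet> b)"
    by (simp add: Basis_vec_def inner_axis axis_eq_axis prod.UNION_disjoint)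
  finally show "emeasure (distr lborel borel ?T) (box l u) = (\<Prod>b\<in>Basis. (u - l) \<bullet> b)" .
qed simp

section \<open>The normalized surface measure\<close>

lemma space_sphere_measure [simp]: "space (sphere_measure :: (real^'m) measure) = sphere 0 1"
  by (simp add: sphere_measure_def space_measure_of_conv)

lemma sets_sphere_measure:
  "sets (sphere_measure :: (real^'m) measure) = sets (restrict_space borel (sphere 0 1))"
proof -
  have "sets (restrict_space borel (sphere (0::real^'m) 1)) \<subseteq> Pow (sphere 0 1)"
    using sets.space_closed[of "restrict_space borel (sphere (0::real^'m) 1)"]
    by (simp add: space_restrict_space)
  then show ?thesis
    unfolding sphere_measure_def sets_measure_of_conv
    using sets.sigma_sets_eq[of "restrict_space borel (sphere (0::real^'m) 1)"]
    by (simp add: space_restrict_space)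
qed

lemma sphere_cone_eq_vimage_sgn:
  assumes "A \<subseteq> sphere (0::real^'m) 1"
  shows "sphere_cone A = sgn -` A \<inter> (cball 0 1 - {0})"
proof (intro set_eqI iffI)
  fix y assume "y \<in> sphere_cone A"
  then obtain t x where "y = t *\<^sub>R x" "0 < t" "t \<le> 1" "x \<in> A"
    unfolding sphere_cone_def by blast
  with assms show "y \<in> sgn -` A \<inter> (cball 0 1 - {0})"
    by (auto simp: sgn_div_norm)
next
  fix y assume y: "y \<in> sgn -` A \<inter> (cball 0 1 - {0})"
  then have "y = norm y *\<^sub>R sgn y" by (simp add: sgn_div_norm)
  moreover have "0 < norm y" "norm y \<le> 1" "sgn y \<in> A" using y by auto
  ultimately show "y \<in> sphere_cone A"
    unfolding sphere_cone_def by blast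
qed

lemma measurable_sgn_punctured_ball:
  "sgn \<in> restrict_space lborel (cball 0 1 - {0}) \<rightarrow>\<^sub>M
     restrict_space borel (sphere (0::'a::euclidean_space) 1)"
  by (rule measurable_restrict_space3) (auto simp: norm_sgn)

text \<open>The definition via \<^const>\<open>measure_of\<close> yields the cone set function only if it is countably
  additive; exhibiting it as a rescaled push-forward of Lebesgue measure establishes this.\<close>

lemma sphere_measure_radial_projection:
  "(sphere_measure :: (real^'m) measure) =
     scale_measure (1 / emeasure lborel (ball (0::real^'m) 1))
       (distr (restrict_space lborel (cball 0 1 - {0})) (restrict_space borel (sphere 0 1)) sgn)"
  (is "_ = scale_measure ?r ?R")
proof -
  let ?P = "cball (0::real^'m) 1 - {0}"
  have cone: "emeasure lebesgue (sphere_cone A) = emeasure ?R A"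
    if "A \<in> sets (restrict_space borel (sphere (0::real^'m) 1))" for A
  proof -
    have A: "A \<subseteq> sphere 0 1" "A \<in> sets borel"
      using that by (auto simp: sets_restrict_space_iff)
    have "sgn -` A \<inter> ?P \<in> sets borel"
      using measurable_sets_borel[OF borel_measurable_sgn A(2)] by (auto intro!: borel_closed)
    then have "emeasure lebesgue (sphere_cone A) = emeasure lborel (sgn -` A \<inter> ?P)"
      by (simp add: sphere_cone_eq_vimage_sgn[OF A(1)])
    also have "\<dots> = emeasure ?R A"
      using measurable_sgn_punctured_ball[where 'a="real^'m"] that
      by (simp add: emeasure_distr emeasure_restrict_space space_restrict_space)
    finally show ?thesis .
  qed
  have ball: "emeasure lebesgue (ball (0::real^'m) 1) = emeasure lborel (ball (0::real^'m) 1)"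
    by simp
  have space_R: "space ?R = sphere 0 1"
    and sets_R: "sets ?R = sets (restrict_space borel (sphere 0 1))"
    by (simp_all add: space_restrict_space)
  have closed: "sets (restrict_space borel (sphere (0::real^'m) 1)) \<subseteq> Pow (sphere 0 1)"
    using sets.space_closed[of "restrict_space borel (sphere (0::real^'m) 1)"]
    by (simp add: space_restrict_space)
  show ?thesis
    unfolding sphere_measure_def scale_measure_def space_R sets_R
  proof (rule measure_of_eq[OF closed])
    fix A assume "A \<in> sigma_sets (sphere 0 1) (sets (restrict_space borel (sphere (0::real^'m) 1)))"
    then have "A \<in> sets (restrict_space borel (sphere (0::real^'m) 1))"
      using sets.sigma_sets_eq[of "restrict_space borel (sphere (0::real^'m) 1)"]
      by (simp add: space_restrict_space)
    then show "emeasure lebesgue (sphere_cone A) / emeasure lebesgue (ball (0::real^'m) 1) =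
        ?r * emeasure ?R A"
      by (simp add: cone ball divide_ennreal_def mult.commute)
  qed
qed

lemma emeasure_sphere_measure:
  assumes "A \<in> sets (sphere_measure :: (real^'m) measure)"
  shows "emeasure sphere_measure A =
    emeasure lborel (sgn -` A \<inter> (cball 0 1 - {0})) / emeasure lborel (ball (0::real^'m) 1)"
proof -
  have "cball 0 1 - {0} \<in> sets (lborel :: (real^'m) measure)"
    by (auto intro!: borel_closed)
  then show ?thesis
    using assms measurable_sgn_punctured_ball[where 'a="real^'m"]
    by (subst sphere_measure_radial_projection)
      (simp add: sets_sphere_measure emeasure_distr emeasure_restrict_space space_restrict_space
        divide_ennreal_def mult.commute)
qed

lemma prob_space_sphere_measure: "prob_space (sphere_measure :: (real^'m) measure)"
proof
  let ?B = "emeasure lborel (ball (0::real^'m) 1)"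
  have "sphere 0 1 \<in> sets (sphere_measure :: (real^'m) measure)"
    by (simp add: sets_sphere_measure sets_restrict_space_iff)
  moreover have "sgn -` sphere 0 1 \<inter> (cball 0 1 - {0}) = cball (0::real^'m) 1 - {0}"
    by (auto simp: norm_sgn)
  ultimately have "emeasure sphere_measure (sphere (0::real^'m) 1) =
      emeasure lborel (cball (0::real^'m) 1 - {0}) / ?B"
    by (simp add: emeasure_sphere_measure)
  also have "emeasure lborel (cball (0::real^'m) 1 - {0}) = ?B"
    by (simp add: emeasure_Diff_null_set finite_imp_null_set_lborel emeasure_cball emeasure_ball)
  also have "?B / ?B = 1"
    by (rule ennreal_divide_self)
      (simp_all add: emeasure_ball, metis less_irrefl of_nat_0_le_iff unit_ball_vol_pos)
  finally show "emeasure (sphere_measure :: (real^'m) measure) (space sphere_measure) = 1"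
    by simp
qed

lemma measurable_sphere_measure_isometry:
  fixes T :: "real^'m \<Rightarrow> real^'m"
  assumes "linear T" and "\<And>x. norm (T x) = norm x"
  shows "T \<in> sphere_measure \<rightarrow>\<^sub>M sphere_measure"
proof -
  have "T \<in> restrict_space borel (sphere 0 1) \<rightarrow>\<^sub>M restrict_space borel (sphere 0 1)"
    using borel_measurable_linear[OF assms(1)] assms(2) by (intro measurable_restrict_space3) auto
  then show ?thesis
    by (simp add: measurable_cong_sets[OF sets_sphere_measure sets_sphere_measure])
qed

lemma distr_sphere_measure_isometry:
  fixes T :: "real^'m \<Rightarrow> real^'m"
  assumes lin: "linear T" and norm: "\<And>x. norm (T x) = norm x"
    and lborel: "distr lborel borel T = lborel"
  shows "distr sphere_measure sphere_measure T = sphere_measure"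
proof (rule measure_eqI)
  let ?P = "cball (0::real^'m) 1 - {0}"
  have T_meas: "T \<in> sphere_measure \<rightarrow>\<^sub>M sphere_measure"
    by (rule measurable_sphere_measure_isometry[OF lin norm])
  have T_borel: "T \<in> borel_measurable borel"
    by (rule borel_measurable_linear[OF lin])
  fix A assume "A \<in> sets (distr sphere_measure sphere_measure T)"
  then have A: "A \<in> sets sphere_measure" by simp
  then have "sgn -` A \<in> sets borel"
    by (intro measurable_sets_borel[OF borel_measurable_sgn])
      (simp add: sets_sphere_measure sets_restrict_space_iff)
  then have A_borel: "sgn -` A \<inter> ?P \<in> sets borel"
    by (auto intro!: borel_closed)
  have sgn_T: "sgn (T x) = T (sgn x)" for x
    using norm[of x] by (simp add: sgn_div_norm linear_scale[OF lin])
  have T_eq_0: "T x = 0 \<longleftrightarrow> x = 0" for x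
    by (metis norm norm_eq_zero)
  have "sgn -` (T -` A \<inter> sphere 0 1) \<inter> ?P = T -` (sgn -` A \<inter> ?P)"
    using norm by (auto simp: sgn_T norm_sgn T_eq_0)
  then have "emeasure (distr sphere_measure sphere_measure T) A =
      emeasure lborel (T -` (sgn -` A \<inter> ?P)) / emeasure lborel (ball (0::real^'m) 1)"
    using A measurable_sets[OF T_meas A]
    by (simp add: emeasure_distr[OF T_meas A] emeasure_sphere_measure)
  also have "emeasure lborel (T -` (sgn -` A \<inter> ?P)) =
      emeasure (distr lborel borel T) (sgn -` A \<inter> ?P)"
    using T_borel A_borel by (simp add: emeasure_distr)
  also have "\<dots> = emeasure lborel (sgn -` A \<inter> ?P)"
    by (simp add: lborel)
  finally show "emeasure (distr sphere_measure sphere_measure T) A = emeasure sphere_measure A"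
    using A by (simp add: emeasure_sphere_measure)
qed simp

lemma integral_sphere_measure_isometry:
  fixes T :: "real^'m \<Rightarrow> real^'m" and f :: "real^'m \<Rightarrow> real"
  assumes "linear T" and "\<And>x. norm (T x) = norm x" and "distr lborel borel T = lborel"
    and "f \<in> borel_measurable sphere_measure"
  shows "(\<integral>x. f (T x) \<partial>sphere_measure) = (\<integral>x. f x \<partial>sphere_measure)"
  using integral_distr[OF measurable_sphere_measure_isometry[OF assms(1,2)] assms(4)]
  by (simp add: distr_sphere_measure_isometry[OF assms(1-3)])

lemma borel_measurable_continuous_on_sphere:
  fixes f :: "real^'m \<Rightarrow> real"
  assumes "sets M = sets sphere_measure" and "continuous_on (sphere 0 1) f"
  shows "f \<in> borel_measurable M"
  using borel_measurable_continuous_on_restrict[OF assms(2)]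
  by (simp add: measurable_cong_sets[OF assms(1) refl] sets_sphere_measure
      measurable_cong_sets[OF sets_sphere_measure refl])

lemma integrable_continuous_on_sphere:
  fixes f :: "real^'m \<Rightarrow> real"
  assumes "finite_measure M" and "sets M = sets sphere_measure" and "continuous_on (sphere 0 1) f"
  shows "integrable M f"
proof -
  interpret finite_measure M by fact
  have "compact (f ` sphere 0 1)"
    using assms(3) by (intro compact_continuous_image compact_sphere)
  then obtain B where B: "\<forall>x\<in>sphere 0 1. norm (f x) \<le> B"
    using compact_imp_bounded bounded_iff by (metis image_eqI)
  have "space M = sphere 0 1"
    using sets_eq_imp_space_eq[OF assms(2)] by simp
  then show ?thesis
    using B borel_measurable_continuous_on_sphere[OF assms(2,3)]
    by (intro integrable_const_bound[where B=B]) auto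
qed

lemma sum_sq_components_sphere:
  assumes "x \<in> sphere (0::real^'m) 1"
  shows "(\<Sum>j\<in>UNIV. x $ j * x $ j) = 1"
proof -
  have "x \<bullet> x = 1"
    using assms by (metis mem_sphere_0 power2_norm_eq_inner power_one)
  then show ?thesis
    by (simp add: inner_vec_def)
qed

lemma integral_sphere_measure_components:
  fixes j k :: "'m::finite"
  shows "(\<integral>x. x $ j * x $ k \<partial>sphere_measure) = (if j = k then 1 / real CARD('m) else (0::real))"
proof -
  interpret prob_space "sphere_measure :: (real^'m) measure"
    by (rule prob_space_sphere_measure)
  have measurable: "(\<lambda>x::real^'m. x $ j * x $ k) \<in> borel_measurable sphere_measure" for j k
    by (intro borel_measurable_continuous_on_sphere continuous_intros) simp
  have integrable: "integrable sphere_measure (\<lambda>x::real^'m. x $ j * x $ k)" for j k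
    by (intro integrable_continuous_on_sphere continuous_intros) simp_all
  have isometry: "(\<integral>x. (signed_perm p s x) $ j * (signed_perm p s x) $ k \<partial>sphere_measure)
      = (\<integral>x. x $ j * x $ k \<partial>sphere_measure)"
    if "bij p" "\<And>i. \<bar>s i\<bar> = 1" for p s and j k :: 'm
    using that measurable
    by (intro integral_sphere_measure_isometry[where f="\<lambda>x. x $ j * x $ k"]
        linear_signed_perm norm_signed_perm lborel_distr_signed_perm)
  have off_diagonal: "(\<integral>x. x $ j * x $ k \<partial>sphere_measure) = 0" if "j \<noteq> k" for j k :: 'm
    using isometry[of id "\<lambda>i. if i = j then -1 else 1" j k] that
    by (simp add: signed_perm_def)
  have diagonal: "(\<integral>x. x $ j * x $ j \<partial>sphere_measure) = (\<integral>x. x $ k * x $ k \<partial>sphere_measure)"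
    for j k :: 'm
    using isometry[of "Transposition.transpose j k" "\<lambda>_. 1" j j]
    by (simp add: signed_perm_def)
  have "(\<Sum>i\<in>(UNIV::'m set). \<integral>x. x $ i * x $ i \<partial>sphere_measure) =
      (\<Sum>i\<in>(UNIV::'m set). \<integral>x. x $ j * x $ j \<partial>sphere_measure)"
    by (intro sum.cong refl diagonal)
  then have "real CARD('m) * (\<integral>x. x $ j * x $ j \<partial>sphere_measure) =
      (\<Sum>i\<in>(UNIV::'m set). \<integral>x. x $ i * x $ i \<partial>sphere_measure)"
    by simp
  also have "\<dots> = (\<integral>x. (\<Sum>i\<in>(UNIV::'m set). x $ i * x $ i) \<partial>sphere_measure)"
    using integrable by (simp add: Bochner_Integration.integral_sum)
  also have "\<dots> = (\<integral>x. 1 \<partial>(sphere_measure :: (real^'m) measure))"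
    by (rule Bochner_Integration.integral_cong) (simp_all add: sum_sq_components_sphere)
  also have "\<dots> = 1"
    using prob_space by simp
  finally show ?thesis
    using off_diagonal by (cases "j = k") (simp_all add: field_simps)
qed

section \<open>Products of probability spaces\<close>

lemma
  fixes f :: "'a \<Rightarrow> real"
  assumes M: "\<And>i. i \<in> I \<Longrightarrow> prob_space (M i)" and i: "i \<in> I"
  shows integrable_PiM_component: "integrable (M i) f \<Longrightarrow> integrable (PiM I M) (\<lambda>x. f (x i))"
    and integral_PiM_component:
      "f \<in> borel_measurable (M i) \<Longrightarrow> (\<integral>x. f (x i) \<partial>PiM I M) = (\<integral>y. f y \<partial>M i)"
proof -
  have component: "(\<lambda>x. x i) \<in> PiM I M \<rightarrow>\<^sub>M M i"
    using i by (rule measurable_component_singleton)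
  have distr: "distr (PiM I M) (M i) (\<lambda>x. x i) = M i"
    using M i by (rule distr_PiM_component)
  show "integrable (PiM I M) (\<lambda>x. f (x i))" if "integrable (M i) f"
    using that integrable_distr_eq[OF component borel_measurable_integrable[OF that]]
    by (simp add: distr)
  show "(\<integral>x. f (x i) \<partial>PiM I M) = (\<integral>y. f y \<partial>M i)" if "f \<in> borel_measurable (M i)"
    using integral_distr[OF component that] by (simp add: distr)
qed

lemma
  fixes f g :: "'a \<Rightarrow> real"
  assumes I: "finite I" and M: "\<And>i. i \<in> I \<Longrightarrow> prob_space (M i)"
    and il: "i \<in> I" "l \<in> I" "i \<noteq> l"
    and f: "integrable (M i) f" and g: "integrable (M l) g"
  shows integrable_PiM_two_components: "integrable (PiM I M) (\<lambda>x. f (x i) * g (x l))"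
    and integral_PiM_two_components:
      "(\<integral>x. f (x i) * g (x l) \<partial>PiM I M) = (\<integral>y. f y \<partial>M i) * (\<integral>y. g y \<partial>M l)"
proof -
  \<comment> \<open>\<open>product_sigma_finite\<close> asks for all factors, but \<open>PiM I\<close> only sees those in \<open>I\<close>.\<close>
  define M' where "M' t = (if t \<in> I then M t else M i)" for t
  interpret product_sigma_finite M'
    unfolding product_sigma_finite_def M'_def
    using M il by (auto intro: prob_space_imp_sigma_finite)
  have PiM_eq: "PiM I M = PiM I M'"
    by (rule PiM_cong) (simp_all add: M'_def)
  define h where "h t y = (if t = i then f y else 1) * (if t = l then g y else 1)" for t y
  have h_cases: "h t = (if t = i then f else if t = l then g else (\<lambda>_. 1))" for t
    using il by (auto simp: h_def fun_eq_iff)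
  have h_integrable: "integrable (M' t) (h t)" if "t \<in> I" for t
    using that f g M
    by (auto simp: h_cases M'_def intro: finite_measure.integrable_const prob_space.finite_measure)
  have h_integral: "integral\<^sup>L (M' t) (h t) =
      (if t = i then \<integral>y. f y \<partial>M i else 1) * (if t = l then \<integral>y. g y \<partial>M l else 1)" if "t \<in> I" for t
    using that il prob_space.prob_space[OF M] by (auto simp: h_cases M'_def)
  have h_prod: "(\<Prod>t\<in>I. h t (x t)) = f (x i) * g (x l)" for x
    using I il by (simp add: h_def prod.distrib)
  show "integrable (PiM I M) (\<lambda>x. f (x i) * g (x l))"
    using product_integrable_prod[OF I h_integrable] by (simp add: PiM_eq h_prod)
  have "(\<integral>x. f (x i) * g (x l) \<partial>PiM I M) = (\<Prod>t\<in>I. integral\<^sup>L (M' t) (h t))"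
    using product_integral_prod[OF I h_integrable] by (simp add: PiM_eq h_prod)
  also have "\<dots> = (\<integral>y. f y \<partial>M i) * (\<integral>y. g y \<partial>M l)"
    using I il by (simp add: h_integral prod.distrib)
  finally show "(\<integral>x. f (x i) * g (x l) \<partial>PiM I M) = (\<integral>y. f y \<partial>M i) * (\<integral>y. g y \<partial>M l)" .
qed

lemma
  fixes g :: "'i \<Rightarrow> 'a \<Rightarrow> real"
  assumes I: "finite I" and M: "\<And>i. i \<in> I \<Longrightarrow> prob_space (M i)"
    and g: "\<And>i. i \<in> I \<Longrightarrow> integrable (M i) (g i)"
    and g_sq: "\<And>i. i \<in> I \<Longrightarrow> integrable (M i) (\<lambda>y. (g i y)\<^sup>2)"
    and centered: "\<And>i. i \<in> I \<Longrightarrow> (\<integral>y. g i y \<partial>M i) = 0"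
  shows integrable_PiM_square_sum_centered: "integrable (PiM I M) (\<lambda>x. (\<Sum>i\<in>I. g i (x i))\<^sup>2)"
    and integral_PiM_square_sum_centered:
      "(\<integral>x. (\<Sum>i\<in>I. g i (x i))\<^sup>2 \<partial>PiM I M) = (\<Sum>i\<in>I. \<integral>y. (g i y)\<^sup>2 \<partial>M i)"
proof -
  have pair: "integrable (PiM I M) (\<lambda>x. g i (x i) * g l (x l)) \<and>
      (\<integral>x. g i (x i) * g l (x l) \<partial>PiM I M) = (if i = l then \<integral>y. (g i y)\<^sup>2 \<partial>M i else 0)"
    if "i \<in> I" "l \<in> I" for i l
  proof (cases "i = l")
    case True
    then show ?thesis
      using that integrable_PiM_component[of I M, OF M _ g_sq]
        integral_PiM_component[of I M, OF M _ borel_measurable_integrable[OF g_sq]]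
      by (simp add: power2_eq_square)
  next
    case False
    then show ?thesis
      using that integrable_PiM_two_components[of I M, OF I M that False g g]
        integral_PiM_two_components[of I M, OF I M that False g g] centered
      by simp
  qed
  have square: "(\<Sum>i\<in>I. g i (x i))\<^sup>2 = (\<Sum>i\<in>I. \<Sum>l\<in>I. g i (x i) * g l (x l))" for x
    by (simp add: power2_eq_square sum_product)
  show "integrable (PiM I M) (\<lambda>x. (\<Sum>i\<in>I. g i (x i))\<^sup>2)"
    unfolding square using pair by (intro Bochner_Integration.integrable_sum) blast
  have "(\<integral>x. (\<Sum>i\<in>I. g i (x i))\<^sup>2 \<partial>PiM I M) = (\<Sum>i\<in>I. \<Sum>l\<in>I. \<integral>x. g i (x i) * g l (x l) \<partial>PiM I M)"
    unfolding square using pair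
    by (simp add: Bochner_Integration.integral_sum)
  also have "\<dots> = (\<Sum>i\<in>I. \<Sum>l\<in>I. if i = l then \<integral>y. (g i y)\<^sup>2 \<partial>M i else 0)"
    using pair by (intro sum.cong refl) blast
  also have "\<dots> = (\<Sum>i\<in>I. \<integral>y. (g i y)\<^sup>2 \<partial>M i)"
    using I by simp
  finally show "(\<integral>x. (\<Sum>i\<in>I. g i (x i))\<^sup>2 \<partial>PiM I M) = (\<Sum>i\<in>I. \<integral>y. (g i y)\<^sup>2 \<partial>M i)" .
qed

section \<open>Partitions and uniform measures\<close>

lemma integral_uniform_measure:
  fixes f :: "'a \<Rightarrow> real"
  assumes A: "A \<in> sets M" "emeasure M A \<noteq> 0" "emeasure M A \<noteq> \<infinity>"
    and f: "f \<in> borel_measurable M"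
  shows "(\<integral>x. f x \<partial>uniform_measure M A) = (\<integral>x. indicator A x * f x \<partial>M) / measure M A"
proof -
  have pos: "0 < measure M A"
    using A by (simp add: emeasure_eq_ennreal_measure zero_less_measure_iff)
  have "uniform_measure M A = density M (\<lambda>x. ennreal (indicator A x / measure M A))"
    unfolding uniform_measure_def using A pos
    by (intro density_cong)
      (auto simp: emeasure_eq_ennreal_measure divide_ennreal ennreal_indicator[symmetric])
  also have "integral\<^sup>L \<dots> f = (\<integral>x. indicator A x / measure M A * f x \<partial>M)"
    using A f by (subst integral_density) auto
  finally show ?thesis
    by simp
qed

lemma integral_eq_sum_indicator:
  fixes f :: "'a \<Rightarrow> real"
  assumes I: "finite I" and A: "\<And>i. i \<in> I \<Longrightarrow> A i \<in> sets M"
    and cover: "space M \<subseteq> (\<Union>i\<in>I. A i)"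
    and overlap: "\<And>i j. i \<in> I \<Longrightarrow> j \<in> I \<Longrightarrow> i \<noteq> j \<Longrightarrow> A i \<inter> A j \<in> null_sets M"
    and f: "integrable M f"
  shows "(\<integral>x. f x \<partial>M) = (\<Sum>i\<in>I. \<integral>x. indicator (A i) x * f x \<partial>M)"
proof -
  have "AE x in M. \<forall>i\<in>I. \<forall>j\<in>I. i \<noteq> j \<longrightarrow> x \<notin> A i \<inter> A j"
  proof (intro eventually_ball_finite[OF I] ballI)
    fix i j assume ij: "i \<in> I" "j \<in> I"
    show "AE x in M. i \<noteq> j \<longrightarrow> x \<notin> A i \<inter> A j"
    proof (cases "i = j")
      case False
      then show ?thesis
        using AE_not_in[OF overlap[OF ij False]] by simp
    qed simp
  qed
  then have "AE x in M. (\<Sum>i\<in>I. indicator (A i) x) = (1::real)"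
  proof (rule AE_mp, intro AE_I2 impI)
    fix x assume x: "x \<in> space M" and disjoint: "\<forall>i\<in>I. \<forall>j\<in>I. i \<noteq> j \<longrightarrow> x \<notin> A i \<inter> A j"
    obtain i where i: "i \<in> I" "x \<in> A i"
      using x cover by blast
    have "(\<Sum>j\<in>I. indicator (A j) x) = (\<Sum>j\<in>I. if j = i then 1 else (0::real))"
      using i disjoint by (intro sum.cong refl) (auto simp: indicator_def)
    then show "(\<Sum>j\<in>I. indicator (A j) x) = (1::real)"
      using I i by simp
  qed
  then have "(\<integral>x. f x \<partial>M) = (\<integral>x. (\<Sum>i\<in>I. indicator (A i) x) * f x \<partial>M)"
    using f A by (intro integral_cong_AE) (auto elim!: eventually_mono)
  also have "\<dots> = (\<integral>x. (\<Sum>i\<in>I. indicator (A i) x * f x) \<partial>M)"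
    by (simp add: sum_distrib_right)
  also have "\<dots> = (\<Sum>i\<in>I. \<integral>x. indicator (A i) x * f x \<partial>M)"
    using A f by (intro Bochner_Integration.integral_sum)
      (simp add: integrable_real_mult_indicator mult.commute)
  finally show ?thesis .
qed

section \<open>Second moments of points on the sphere\<close>

lemma inner_sq_ge_of_dist_le:
  fixes x y :: "'a::real_inner"
  assumes "norm x = 1" and "norm y = 1" and "dist x y \<le> \<delta>" and "\<delta> \<le> sqrt 2"
  shows "(1 - \<delta>\<^sup>2 / 2)\<^sup>2 \<le> (x \<bullet> y)\<^sup>2"
proof -
  have "x \<bullet> x = 1" and "y \<bullet> y = 1"
    using assms(1,2) by (simp_all flip: power2_norm_eq_inner)
  then have "(dist x y)\<^sup>2 = 2 - 2 * (x \<bullet> y)"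
    by (simp add: dist_norm power2_norm_eq_inner inner_diff inner_commute)
  moreover have "(dist x y)\<^sup>2 \<le> \<delta>\<^sup>2"
    using assms(3) by (simp add: power_mono)
  moreover have "\<delta>\<^sup>2 \<le> 2"
    using assms(3,4) zero_le_dist[of x y]
    by (metis order_trans power_mono real_sqrt_pow2 zero_le_numeral)
  ultimately have "1 - \<delta>\<^sup>2 / 2 \<le> x \<bullet> y" and "0 \<le> 1 - \<delta>\<^sup>2 / 2"
    by linarith+
  then show ?thesis
    by (rule power_mono)
qed

lemma power2_inner_vec:
  fixes x y :: "real^'m"
  shows "(x \<bullet> y)\<^sup>2 = (\<Sum>j\<in>UNIV. \<Sum>k\<in>UNIV. (x $ j * x $ k) * (y $ j * y $ k))"
  by (simp add: inner_vec_def power2_eq_square sum_product algebra_simps)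

lemma frobenius_norm_sq: "(frobenius_norm A)\<^sup>2 = (\<Sum>j\<in>UNIV. \<Sum>k\<in>UNIV. (A $ j $ k)\<^sup>2)"
  unfolding frobenius_norm_def by (simp add: sum_nonneg)

lemma sum_sq_second_moments_ge:
  fixes M :: "(real^'m) measure"
  assumes "prob_space M" and integrable: "\<And>j k. integrable M (\<lambda>x. x $ j * x $ k)"
    and "AE x in M. x \<in> S" and b: "\<And>x y. x \<in> S \<Longrightarrow> y \<in> S \<Longrightarrow> b \<le> (x \<bullet> y)\<^sup>2"
  shows "b \<le> (\<Sum>j\<in>UNIV. \<Sum>k\<in>UNIV. (\<integral>x. x $ j * x $ k \<partial>M)\<^sup>2)"
proof -
  interpret prob_space M by fact
  define m where "m j k = (\<integral>x. x $ j * x $ k \<partial>M)" for j k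
  have quadratic_form: "integrable M (\<lambda>y. \<Sum>j\<in>UNIV. \<Sum>k\<in>UNIV. c j k * (y $ j * y $ k)) \<and>
      (\<integral>y. (\<Sum>j\<in>UNIV. \<Sum>k\<in>UNIV. c j k * (y $ j * y $ k)) \<partial>M) =
        (\<Sum>j\<in>UNIV. \<Sum>k\<in>UNIV. c j k * m j k)" for c
    using integrable by (simp add: m_def)
  have "b \<le> (\<Sum>j\<in>UNIV. \<Sum>k\<in>UNIV. (x $ j * x $ k) * m j k)" if "x \<in> S" for x
  proof -
    have "AE y in M. b \<le> (x \<bullet> y)\<^sup>2"
      using \<open>AE x in M. x \<in> S\<close> by (rule eventually_mono) (use b that in blast)
    then have "b \<le> (\<integral>y. (x \<bullet> y)\<^sup>2 \<partial>M)"
      using quadratic_form[of "\<lambda>j k. x $ j * x $ k"]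
      by (intro integral_ge_const) (simp_all add: power2_inner_vec)
    then show ?thesis
      using quadratic_form[of "\<lambda>j k. x $ j * x $ k"] by (simp add: power2_inner_vec)
  qed
  then have "b \<le> (\<integral>x. (\<Sum>j\<in>UNIV. \<Sum>k\<in>UNIV. m j k * (x $ j * x $ k)) \<partial>M)"
    using quadratic_form[of m] \<open>AE x in M. x \<in> S\<close>
    by (intro integral_ge_const) (auto elim!: eventually_mono simp: mult.commute)
  then show ?thesis
    using quadratic_form[of m] by (simp add: m_def power2_eq_square)
qed

lemma sum_variances_components_le:
  fixes M :: "(real^'m) measure"
  assumes "prob_space M" and sets_M: "sets M = sets sphere_measure"
    and "AE x in M. x \<in> S" and "\<And>x y. x \<in> S \<Longrightarrow> y \<in> S \<Longrightarrow> b \<le> (x \<bullet> y)\<^sup>2"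
  shows "(\<Sum>j\<in>UNIV. \<Sum>k\<in>UNIV. \<integral>x. (x $ j * x $ k - (\<integral>y. y $ j * y $ k \<partial>M))\<^sup>2 \<partial>M) \<le> 1 - b"
proof -
  interpret prob_space M by fact
  have space_M: "space M = sphere 0 1"
    using sets_eq_imp_space_eq[OF sets_M] by simp
  have integrable: "integrable M (\<lambda>x. x $ j * x $ k)" "integrable M (\<lambda>x. (x $ j * x $ k)\<^sup>2)" for j k
    using sets_M
    by (auto intro!: integrable_continuous_on_sphere continuous_intros finite_measure_axioms)
  have "(\<Sum>j\<in>UNIV. \<Sum>k\<in>UNIV. \<integral>x. (x $ j * x $ k)\<^sup>2 \<partial>M) = (\<integral>x. (x \<bullet> x)\<^sup>2 \<partial>M)"
    unfolding power2_inner_vec using integrable(2)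
    by (simp add: power2_eq_square Bochner_Integration.integral_sum)
  also have "\<dots> = (\<integral>x. 1 \<partial>M)"
    by (intro Bochner_Integration.integral_cong) (simp_all add: space_M dot_square_norm)
  also have "\<dots> = 1"
    by (simp add: prob_space)
  finally have "(\<Sum>j\<in>UNIV. \<Sum>k\<in>UNIV. \<integral>x. (x $ j * x $ k - (\<integral>y. y $ j * y $ k \<partial>M))\<^sup>2 \<partial>M)
      = 1 - (\<Sum>j\<in>UNIV. \<Sum>k\<in>UNIV. (\<integral>x. x $ j * x $ k \<partial>M)\<^sup>2)"
    using integrable by (simp add: variance_eq sum_subtractf)
  also have "\<dots> \<le> 1 - b"
    using sum_sq_second_moments_ge[OF assms(1) integrable(1) assms(3,4)] by simp
  finally show ?thesis .
qed

lemma integral_frobenius_sq_gram_PiM: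
  fixes M :: "nat \<Rightarrow> (real^'m) measure" and C :: "real^'m^'m"
  assumes prob: "\<And>i. i < n \<Longrightarrow> prob_space (M i)"
    and sets: "\<And>i. i < n \<Longrightarrow> sets (M i) = sets sphere_measure"
    and C: "\<And>j k. C $ j $ k = (\<Sum>i<n. \<integral>y. y $ j * y $ k \<partial>M i) / real n"
  shows "(\<integral>x. (frobenius_norm ((1 / real n) *\<^sub>R analysis_gram n x - C))\<^sup>2 \<partial>PiM {..<n} M) =
    (\<Sum>i<n. \<Sum>j\<in>UNIV. \<Sum>k\<in>UNIV. \<integral>y. (y $ j * y $ k - (\<integral>z. z $ j * z $ k \<partial>M i))\<^sup>2 \<partial>M i) / (real n)\<^sup>2"
proof -
  define g where "g j k i y = y $ j * y $ k - (\<integral>z. z $ j * z $ k \<partial>M i)" for j k i and y :: "real^'m"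
  have integrable: "integrable (M i) (g j k i)" "integrable (M i) (\<lambda>y. (g j k i y)\<^sup>2)"
    if "i < n" for i j k
    using that sets prob unfolding g_def
    by (auto intro!: integrable_continuous_on_sphere continuous_intros prob_space.finite_measure)
  have centered: "(\<integral>y. g j k i y \<partial>M i) = 0" if "i < n" for i j k
  proof -
    interpret prob_space "M i"
      using prob that by blast
    have "integrable (M i) (\<lambda>y. y $ j * y $ k)"
      using sets that
      by (intro integrable_continuous_on_sphere continuous_intros finite_measure_axioms) simp
    then show ?thesis
      unfolding g_def by (simp add: prob_space)
  qed
  have entry: "((1 / real n) *\<^sub>R analysis_gram n x - C) $ j $ k =
      (\<Sum>i<n. g j k i (x i)) / real n" for x j k
    by (simp add: analysis_gram_def C g_def sum_subtractf diff_divide_distrib)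
  have "(\<integral>x. (frobenius_norm ((1 / real n) *\<^sub>R analysis_gram n x - C))\<^sup>2 \<partial>PiM {..<n} M) =
      (\<integral>x. (\<Sum>j\<in>UNIV. \<Sum>k\<in>UNIV. (\<Sum>i<n. g j k i (x i))\<^sup>2 / (real n)\<^sup>2) \<partial>PiM {..<n} M)"
    by (simp only: frobenius_norm_sq entry power_divide)
  also have "\<dots> = (\<Sum>j\<in>UNIV. \<Sum>k\<in>UNIV. (\<Sum>i<n. \<integral>y. (g j k i y)\<^sup>2 \<partial>M i) / (real n)\<^sup>2)"
    using integrable_PiM_square_sum_centered[of "{..<n}" M, OF _ prob integrable centered]
      integral_PiM_square_sum_centered[of "{..<n}" M, OF _ prob integrable centered]
    by (simp add: Bochner_Integration.integral_sum)
  also have "\<dots> = (\<Sum>i<n. \<Sum>j\<in>UNIV. \<Sum>k\<in>UNIV. \<integral>y. (g j k i y)\<^sup>2 \<partial>M i) / (real n)\<^sup>2"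
    by (simp add: sum_divide_distrib sum.swap[of _ "{..<n}"])
  finally show ?thesis
    by (simp add: g_def)
qed

section \<open>Jittered sampling\<close>

lemma jittered_partition_prob_space:
  fixes D :: "nat \<Rightarrow> (real^'m) set"
  assumes "jittered_partition n c D" and "i < n"
  shows "prob_space (uniform_measure sphere_measure (D i))"
proof -
  interpret prob_space "sphere_measure :: (real^'m) measure"
    by (rule prob_space_sphere_measure)
  show ?thesis
    using assms
    by (intro prob_space_uniform_measure) (auto simp: jittered_partition_def emeasure_eq_measure)
qed

lemma jittered_partition_sum_integrals:
  fixes f :: "real^'m \<Rightarrow> real"
  assumes D: "jittered_partition n c D" and f: "continuous_on (sphere 0 1) f"
  shows "(\<Sum>i<n. \<integral>x. f x \<partial>uniform_measure sphere_measure (D i)) = real n * (\<integral>x. f x \<partial>sphere_measure)"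
proof -
  interpret prob_space "sphere_measure :: (real^'m) measure"
    by (rule prob_space_sphere_measure)
  have measure_D: "D i \<in> sets sphere_measure" "measure sphere_measure (D i) = 1 / real n"
    if "i < n" for i
    using D that by (auto simp: jittered_partition_def)
  have "(\<integral>x. f x \<partial>uniform_measure sphere_measure (D i)) =
      real n * (\<integral>x. indicator (D i) x * f x \<partial>sphere_measure)"
    if "i < n" for i
    using that measure_D[OF that] borel_measurable_continuous_on_sphere[OF refl f]
    by (subst integral_uniform_measure) (auto simp: emeasure_eq_measure)
  moreover have "(\<integral>x. f x \<partial>sphere_measure) = (\<Sum>i<n. \<integral>x. indicator (D i) x * f x \<partial>sphere_measure)"
    using D measure_D f
    by (intro integral_eq_sum_indicator integrable_continuous_on_sphere finite_measure_axioms)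
      (auto simp: jittered_partition_def emeasure_eq_measure)
  ultimately show ?thesis
    by (simp add: sum_distrib_left)
qed

lemma jittered_partition_inner_sq_ge:
  assumes D: "jittered_partition n c D" and "i < n" and "x \<in> D i" and "y \<in> D i"
  shows "(1 - c\<^sup>2 / (2 * real n powr (2 / real (CARD('m) - 1))))\<^sup>2 \<le> (x \<bullet> (y :: real^'m))\<^sup>2"
proof -
  define \<delta> where "\<delta> = c / real n powr (1 / real (CARD('m) - 1))"
  have D_sphere: "D i \<subseteq> sphere 0 1"
    using D \<open>i < n\<close>
    by (auto simp: jittered_partition_def sets_sphere_measure sets_restrict_space_iff)
  then have "dist x y \<le> diameter (D i)"
    using assms(3,4) bounded_subset[OF bounded_sphere] by (intro diameter_bounded_bound) auto
  also have "\<dots> \<le> \<delta>"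
    using D \<open>i < n\<close> by (simp add: jittered_partition_def \<delta>_def)
  finally have "(1 - \<delta>\<^sup>2 / 2)\<^sup>2 \<le> (x \<bullet> y)\<^sup>2"
    using D D_sphere assms(3,4)
    by (intro inner_sq_ge_of_dist_le) (auto simp: jittered_partition_def \<delta>_def)
  moreover have "\<delta>\<^sup>2 = c\<^sup>2 / real n powr (2 / real (CARD('m) - 1))"
    using \<open>i < n\<close> by (simp add: \<delta>_def power_divide powr_power)
  ultimately show ?thesis
    by (simp add: mult.commute)
qed

theorem theorem2:
  fixes n :: nat and c :: real and D :: "nat \<Rightarrow> (real^'m) set"
  assumes "CARD('m) \<ge> 2"
    and "n \<ge> 1"
    and "jittered_partition n c D"
  shows "(\<integral>x. (frobenius_norm ((1 / real n) *\<^sub>R analysis_gram n x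
              - (1 / real CARD('m)) *\<^sub>R mat 1))^2 \<partial>(jittered_law n D))
         \<le> 1 / real n - 1 / real n *
             (1 - c^2 / (2 * real n powr (2 / real (CARD('m) - 1))))^2"
proof -
  \<comment> \<open>The bound holds in every dimension.\<close>
  let ?\<mu> = "\<lambda>i. uniform_measure sphere_measure (D i)"
  let ?b = "(1 - c^2 / (2 * real n powr (2 / real (CARD('m) - 1))))^2"
  have prob: "\<And>i. i < n \<Longrightarrow> prob_space (?\<mu> i)"
    using assms(3) by (rule jittered_partition_prob_space)
  have mean: "((1 / real CARD('m)) *\<^sub>R mat 1 :: real^'m^'m) $ j $ k =
      (\<Sum>i<n. \<integral>y. y $ j * y $ k \<partial>?\<mu> i) / real n"
    for j k
    using assms(2) jittered_partition_sum_integrals[OF assms(3), of "\<lambda>y. y $ j * y $ k"]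
    by (simp add: integral_sphere_measure_components mat_def continuous_intros)
  have variance: "(\<Sum>j\<in>UNIV. \<Sum>k\<in>UNIV.
      \<integral>y. (y $ j * y $ k - (\<integral>z. z $ j * z $ k \<partial>?\<mu> i))\<^sup>2 \<partial>?\<mu> i) \<le> 1 - ?b"
    if "i < n" for i
    using assms(3) that
    by (intro sum_variances_components_le[OF prob[OF that], where S = "D i"] AE_uniform_measureI
        jittered_partition_inner_sq_ge) (auto simp: jittered_partition_def)
  have "(\<integral>x. (frobenius_norm ((1 / real n) *\<^sub>R analysis_gram n x
      - (1 / real CARD('m)) *\<^sub>R mat 1))^2 \<partial>(jittered_law n D))
      = (\<Sum>i<n. \<Sum>j\<in>UNIV. \<Sum>k\<in>UNIV.
          \<integral>y. (y $ j * y $ k - (\<integral>z. z $ j * z $ k \<partial>?\<mu> i))\<^sup>2 \<partial>?\<mu> i) / (real n)\<^sup>2"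
    unfolding jittered_law_def using prob mean by (intro integral_frobenius_sq_gram_PiM) auto
  also have "\<dots> \<le> (\<Sum>i<n. 1 - ?b) / (real n)\<^sup>2"
    using variance by (intro divide_right_mono sum_mono) auto
  also have "\<dots> = 1 / real n - 1 / real n * ?b"
    using assms(2) by (simp add: power2_eq_square field_simps)
  finally show ?thesis .
qed

end
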